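(* Let $(D,V)$ be an admissible pair, $E,\alpha$ as below, and $\beta\in\mathbb{R}$ with $|\beta+\alpha|\le\tau(E)$. Then $V_\beta C^\infty(D)$ is a closed subspace of $C^\infty(D)$, and every $\varphi\in(V_\beta C^\infty(D))^\perp$ satisfies $(\mathcal{W}\varphi)(z)=ce^{i\beta z}$ for all $z\in\mathbb{C}$, for some constant $c\in\mathbb{C}$.
   Context: Let $H$ be a separable complex Hilbert space. A pair $(D,V)$ of operators is called admissible if: (i) $D:\mathscr{D}(D)\subset H\to H$ is a densely defined closed linear operator; (ii) $\dim\ker D=1$; (iii) $D$ has a self-adjoint restriction with compact resolvent; (iv) $V:H\to H$ is a compact operator with $\sigma(V)=\{0\}$; (v) $\operatorname{Ran}V\subset\mathscr{D}(D)$ and $DV=I$. Fix $0\neq\phi_0\in\ker D$ and put $\phi_\lambda=(I-\lambda V)^{-1}\phi_0$ for $\lambda\in\mathbb{C}$. The generalized Fourier transform is $(\mathcal{W}x)(\lambda)=\langle x,\phi_{\bar\lambda}\rangle_H$; $\mathcal{W}H$ is a Hilbert space of entire functions with norm $\|\mathcal{W}x\|:=\|x\|_H$. A Hermite–Biehler (HB) function is an entire $E$ with $|E(z)|>|E(\bar z)|$ for $z\in\mathbb{C}_+$; $\mathcal{H}(E)$ is the space of entire $f$ with $f/E,f^\#/E\in H^2(\mathbb{C}_+)$ ($f^\#(z)=\overline{f(\bar z)}$), normed by $\|f/E\|_{L^2(\mathbb{R})}$; $E$ is regular if $1/((z+i)E)\in H^2(\mathbb{C}_+)$; $\tau(f)=\limsup_{|z|\to\infty}\log|f(z)|/|z|$.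 It is known that there exist a regular HB function $E$ with no real zeros and $\alpha\in\mathbb{R}$ such that $f\mapsto e^{i\alpha z}f$ is a unitary map of $\mathcal{W}H$ onto $\mathcal{H}(E)$; fix such $E$ and $\alpha$. For $\beta\in\mathbb{R}$ with $|\beta+\alpha|\le\tau(E)$, the function $(1-e^{i\beta z})/z$ lies in $\mathcal{W}H$; set $x_\beta=\mathcal{W}^{-1}\big((1-e^{i\beta z})/z\big)$ and $V_\beta u=Vu+\langle u,x_\beta\rangle\phi_0$ for $u\in H$. Let $\mathscr{D}(D^1)=\mathscr{D}(D)$, $\mathscr{D}(D^n)=\{x\in\mathscr{D}(D^{n-1}):D^{n-1}x\in\mathscr{D}(D)\}$, and $C^\infty(D)=\bigcap_{n\ge1}\mathscr{D}(D^n)$, a Fréchet space with the metric $d(x,y)=\sum_{j\ge0}2^{-j}\frac{\|D^jx-D^jy\|_H}{1+\|D^jx-D^jy\|_H}$; $D$ and $V_\beta$ act continuously on it. For $\varphi\in(C^\infty(D))'$ set $(\mathcal{W}\varphi)(z)=\overline{\varphi(\phi_{\bar z})}$; $\mathcal{M}^\perp$ denotes the set of continuous functionals vanishing on $\mathcal{M}$. *)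

theory Defs
  imports "HOL-Analysis.Analysis" "HOL-Library.Extended_Real" "HOL-Library.Liminf_Limsup"
begin

text \<open>The Hilbert space H is modelled by a type 'h carrying an additive group
structure, a complex scalar multiplication sc and an inner product ip
(linear in the first, conjugate linear in the second argument).\<close>

definition hnorm :: "('h \<Rightarrow> 'h \<Rightarrow> complex) \<Rightarrow> 'h \<Rightarrow> real" where
  "hnorm ip x = sqrt (Re (ip x x))"

definition hconv :: "('h \<Rightarrow> 'h \<Rightarrow> complex) \<Rightarrow> (nat \<Rightarrow> 'h::ab_group_add) \<Rightarrow> 'h \<Rightarrow> bool" where
  "hconv ip X l \<longleftrightarrow> (\<lambda>n. hnorm ip (X n - l)) \<longlonglongrightarrow> 0"

definition separable_complex_hilbert ::
  "(complex \<Rightarrow> 'h::ab_group_add \<Rightarrow> 'h) \<Rightarrow> ('h \<Rightarrow> 'h \<Rightarrow> complex) \<Rightarrow> bool" where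
  "separable_complex_hilbert sc ip \<longleftrightarrow>
     (\<forall>a x y. sc a (x + y) = sc a x + sc a y) \<and>
     (\<forall>a b x. sc (a + b) x = sc a x + sc b x) \<and>
     (\<forall>a b x. sc a (sc b x) = sc (a * b) x) \<and>
     (\<forall>x. sc 1 x = x) \<and>
     (\<forall>x y z. ip (x + y) z = ip x z + ip y z) \<and>
     (\<forall>a x y. ip (sc a x) y = a * ip x y) \<and>
     (\<forall>x y. ip y x = cnj (ip x y)) \<and>
     (\<forall>x. 0 \<le> Re (ip x x)) \<and>
     (\<forall>x. ip x x = 0 \<longrightarrow> x = 0) \<and>
     (\<forall>X. (\<forall>e>0. \<exists>N. \<forall>m\<ge>N. \<forall>n\<ge>N. hnorm ip (X m - X n) < e) \<longrightarrow> (\<exists>l. hconv ip X l)) \<and>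
     (\<exists>S. countable S \<and> (\<forall>x. \<exists>X. (\<forall>n. X n \<in> S) \<and> hconv ip X x))"

definition hsubspace :: "(complex \<Rightarrow> 'h::ab_group_add \<Rightarrow> 'h) \<Rightarrow> 'h set \<Rightarrow> bool" where
  "hsubspace sc M \<longleftrightarrow> 0 \<in> M \<and> (\<forall>x\<in>M. \<forall>y\<in>M. x + y \<in> M) \<and> (\<forall>a. \<forall>x\<in>M. sc a x \<in> M)"

text \<open>Linear operator T with domain dm (T is only meaningful on dm).\<close>
definition linear_on :: "(complex \<Rightarrow> 'h::ab_group_add \<Rightarrow> 'h) \<Rightarrow> 'h set \<Rightarrow> ('h \<Rightarrow> 'h) \<Rightarrow> bool" where
  "linear_on sc dm T \<longleftrightarrow> hsubspace sc dm \<and>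
     (\<forall>x\<in>dm. \<forall>y\<in>dm. T (x + y) = T x + T y) \<and> (\<forall>a. \<forall>x\<in>dm. T (sc a x) = sc a (T x))"

definition dense_set :: "('h \<Rightarrow> 'h \<Rightarrow> complex) \<Rightarrow> 'h::ab_group_add set \<Rightarrow> bool" where
  "dense_set ip S \<longleftrightarrow> (\<forall>x. \<exists>X. (\<forall>n. X n \<in> S) \<and> hconv ip X x)"

definition closed_operator ::
  "(complex \<Rightarrow> 'h::ab_group_add \<Rightarrow> 'h) \<Rightarrow> ('h \<Rightarrow> 'h \<Rightarrow> complex) \<Rightarrow> 'h set \<Rightarrow> ('h \<Rightarrow> 'h) \<Rightarrow> bool" where
  "closed_operator sc ip dm T \<longleftrightarrow> linear_on sc dm T \<and>
     (\<forall>X x y. (\<forall>n. X n \<in> dm) \<and> hconv ip X x \<and> hconv ip (\<lambda>n. T (X n)) y \<longrightarrow> x \<in> dm \<and> T x = y)"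

definition bounded_op ::
  "(complex \<Rightarrow> 'h::ab_group_add \<Rightarrow> 'h) \<Rightarrow> ('h \<Rightarrow> 'h \<Rightarrow> complex) \<Rightarrow> ('h \<Rightarrow> 'h) \<Rightarrow> bool" where
  "bounded_op sc ip T \<longleftrightarrow> linear_on sc UNIV T \<and> (\<exists>K. \<forall>x. hnorm ip (T x) \<le> K * hnorm ip x)"

definition compact_op ::
  "(complex \<Rightarrow> 'h::ab_group_add \<Rightarrow> 'h) \<Rightarrow> ('h \<Rightarrow> 'h \<Rightarrow> complex) \<Rightarrow> ('h \<Rightarrow> 'h) \<Rightarrow> bool" where
  "compact_op sc ip T \<longleftrightarrow> linear_on sc UNIV T \<and>
     (\<forall>X. (\<exists>K. \<forall>n::nat. hnorm ip (X n) \<le> K) \<longrightarrow>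
          (\<exists>r l. strict_mono r \<and> hconv ip (\<lambda>n. T (X (r n))) l))"

definition op_spectrum ::
  "(complex \<Rightarrow> 'h::ab_group_add \<Rightarrow> 'h) \<Rightarrow> ('h \<Rightarrow> 'h \<Rightarrow> complex) \<Rightarrow> ('h \<Rightarrow> 'h) \<Rightarrow> complex set" where
  "op_spectrum sc ip T = {lam. \<not> (\<exists>S. bounded_op sc ip S \<and>
       (\<forall>x. S (T x - sc lam x) = x) \<and> (\<forall>y. T (S y) - sc lam (S y) = y))}"

text \<open>Self-adjoint operator A with domain dm (densely defined, A = A*).\<close>
definition self_adjoint_op ::
  "(complex \<Rightarrow> 'h::ab_group_add \<Rightarrow> 'h) \<Rightarrow> ('h \<Rightarrow> 'h \<Rightarrow> complex) \<Rightarrow> 'h set \<Rightarrow> ('h \<Rightarrow> 'h) \<Rightarrow> bool" where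
  "self_adjoint_op sc ip dm A \<longleftrightarrow> linear_on sc dm A \<and> dense_set ip dm \<and>
     {y. \<exists>z. \<forall>x\<in>dm. ip (A x) y = ip x z} = dm \<and>
     (\<forall>x\<in>dm. \<forall>y\<in>dm. ip (A x) y = ip x (A y))"

definition has_compact_resolvent ::
  "(complex \<Rightarrow> 'h::ab_group_add \<Rightarrow> 'h) \<Rightarrow> ('h \<Rightarrow> 'h \<Rightarrow> complex) \<Rightarrow> 'h set \<Rightarrow> ('h \<Rightarrow> 'h) \<Rightarrow> bool" where
  "has_compact_resolvent sc ip dm A \<longleftrightarrow>
     (\<exists>lam R. (\<forall>y. R y \<in> dm \<and> A (R y) - sc lam (R y) = y) \<and>
            (\<forall>x\<in>dm. R (A x - sc lam x) = x) \<and> compact_op sc ip R)"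

definition admissible ::
  "(complex \<Rightarrow> 'h::ab_group_add \<Rightarrow> 'h) \<Rightarrow> ('h \<Rightarrow> 'h \<Rightarrow> complex) \<Rightarrow> 'h set \<Rightarrow> ('h \<Rightarrow> 'h) \<Rightarrow> ('h \<Rightarrow> 'h) \<Rightarrow> bool" where
  "admissible sc ip domD D V \<longleftrightarrow>
     dense_set ip domD \<and> closed_operator sc ip domD D \<and>
     (\<exists>e. e \<noteq> 0 \<and> {x\<in>domD. D x = 0} = range (\<lambda>c. sc c e)) \<and>
     (\<exists>domA. domA \<subseteq> domD \<and> self_adjoint_op sc ip domA D \<and> has_compact_resolvent sc ip domA D) \<and>
     compact_op sc ip V \<and> op_spectrum sc ip V = {0} \<and>
     range V \<subseteq> domD \<and> (\<forall>x. D (V x) = x)"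

definition phi_fun ::
  "(complex \<Rightarrow> 'h::ab_group_add \<Rightarrow> 'h) \<Rightarrow> ('h \<Rightarrow> 'h) \<Rightarrow> 'h \<Rightarrow> complex \<Rightarrow> 'h" where
  "phi_fun sc V phi0 lam = (THE y. y - sc lam (V y) = phi0)"

definition gen_fourier ::
  "(complex \<Rightarrow> 'h::ab_group_add \<Rightarrow> 'h) \<Rightarrow> ('h \<Rightarrow> 'h \<Rightarrow> complex) \<Rightarrow> ('h \<Rightarrow> 'h) \<Rightarrow> 'h \<Rightarrow> 'h \<Rightarrow> complex \<Rightarrow> complex" where
  "gen_fourier sc ip V phi0 x lam = ip x (phi_fun sc V phi0 (cnj lam))"

definition upper_half_plane :: "complex set" where
  "upper_half_plane = {z. 0 < Im z}"

definition hardy2 :: "(complex \<Rightarrow> complex) set" where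
  "hardy2 = {F. F holomorphic_on upper_half_plane \<and>
     (\<exists>M. \<forall>y>0. (\<lambda>x::real. (cmod (F (Complex x y)))\<^sup>2) integrable_on UNIV \<and>
                 integral UNIV (\<lambda>x::real. (cmod (F (Complex x y)))\<^sup>2) \<le> M)}"

definition hermite_biehler :: "(complex \<Rightarrow> complex) \<Rightarrow> bool" where
  "hermite_biehler E \<longleftrightarrow> E holomorphic_on UNIV \<and>
     (\<forall>z. 0 < Im z \<longrightarrow> cmod (E (cnj z)) < cmod (E z))"

definition sharp :: "(complex \<Rightarrow> complex) \<Rightarrow> complex \<Rightarrow> complex" where
  "sharp f z = cnj (f (cnj z))"

definition de_branges_space :: "(complex \<Rightarrow> complex) \<Rightarrow> (complex \<Rightarrow> complex) set" where
  "de_branges_space E = {f. f holomorphic_on UNIV \<and>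
     (\<lambda>z. f z / E z) \<in> hardy2 \<and> (\<lambda>z. sharp f z / E z) \<in> hardy2}"

definition de_branges_norm :: "(complex \<Rightarrow> complex) \<Rightarrow> (complex \<Rightarrow> complex) \<Rightarrow> real" where
  "de_branges_norm E f = sqrt (integral UNIV (\<lambda>x::real. (cmod (f (of_real x) / E (of_real x)))\<^sup>2))"

definition regular_HB :: "(complex \<Rightarrow> complex) \<Rightarrow> bool" where
  "regular_HB E \<longleftrightarrow> (\<lambda>z. 1 / ((z + \<i>) * E z)) \<in> hardy2"

definition exp_type :: "(complex \<Rightarrow> complex) \<Rightarrow> ereal" where
  "exp_type f = Limsup at_infinity
     (\<lambda>z. if f z = 0 then -\<infinity> else ereal (ln (cmod (f z)) / cmod z))"

fun dom_pow :: "'h set \<Rightarrow> ('h \<Rightarrow> 'h) \<Rightarrow> nat \<Rightarrow> 'h set" where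
  "dom_pow domD D 0 = UNIV"
| "dom_pow domD D (Suc n) = {x \<in> dom_pow domD D n. (D ^^ n) x \<in> domD}"

definition C_inf :: "'h set \<Rightarrow> ('h \<Rightarrow> 'h) \<Rightarrow> 'h set" where
  "C_inf domD D = (\<Inter>n\<in>{1..}. dom_pow domD D n)"

definition C_inf_dist :: "('h \<Rightarrow> 'h \<Rightarrow> complex) \<Rightarrow> ('h \<Rightarrow> 'h) \<Rightarrow> 'h \<Rightarrow> 'h::ab_group_add \<Rightarrow> real" where
  "C_inf_dist ip D x y = (\<Sum>j. (1 / 2 ^ j) *
      (hnorm ip ((D ^^ j) x - (D ^^ j) y) / (1 + hnorm ip ((D ^^ j) x - (D ^^ j) y))))"

definition C_inf_closed :: "('h \<Rightarrow> 'h \<Rightarrow> complex) \<Rightarrow> 'h set \<Rightarrow> ('h \<Rightarrow> 'h) \<Rightarrow> 'h::ab_group_add set \<Rightarrow> bool" where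
  "C_inf_closed ip domD D M \<longleftrightarrow> M \<subseteq> C_inf domD D \<and>
     (\<forall>X y. (\<forall>n. X n \<in> M) \<and> y \<in> C_inf domD D \<and> (\<lambda>n. C_inf_dist ip D (X n) y) \<longlonglongrightarrow> 0 \<longrightarrow> y \<in> M)"

text \<open>Continuous linear functionals on C^\<infinity>(D) (values outside C^\<infinity>(D) are irrelevant).\<close>
definition C_inf_dual ::
  "(complex \<Rightarrow> 'h::ab_group_add \<Rightarrow> 'h) \<Rightarrow> ('h \<Rightarrow> 'h \<Rightarrow> complex) \<Rightarrow> 'h set \<Rightarrow> ('h \<Rightarrow> 'h) \<Rightarrow> ('h \<Rightarrow> complex) set" where
  "C_inf_dual sc ip domD D = {\<phi>.
     (\<forall>x\<in>C_inf domD D. \<forall>y\<in>C_inf domD D. \<phi> (x + y) = \<phi> x + \<phi> y) \<and>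
     (\<forall>a. \<forall>x\<in>C_inf domD D. \<phi> (sc a x) = a * \<phi> x) \<and>
     (\<forall>X y. (\<forall>n. X n \<in> C_inf domD D) \<and> y \<in> C_inf domD D \<and>
            (\<lambda>n. C_inf_dist ip D (X n) y) \<longlonglongrightarrow> 0 \<longrightarrow> (\<lambda>n. \<phi> (X n)) \<longlonglongrightarrow> \<phi> y)}"

definition annihilator ::
  "(complex \<Rightarrow> 'h::ab_group_add \<Rightarrow> 'h) \<Rightarrow> ('h \<Rightarrow> 'h \<Rightarrow> complex) \<Rightarrow> 'h set \<Rightarrow> ('h \<Rightarrow> 'h) \<Rightarrow> 'h set \<Rightarrow> ('h \<Rightarrow> complex) set" where
  "annihilator sc ip domD D M = {\<phi> \<in> C_inf_dual sc ip domD D. \<forall>x\<in>M. \<phi> x = 0}"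

definition gen_fourier_dual ::
  "(complex \<Rightarrow> 'h::ab_group_add \<Rightarrow> 'h) \<Rightarrow> ('h \<Rightarrow> 'h) \<Rightarrow> 'h \<Rightarrow> ('h \<Rightarrow> complex) \<Rightarrow> complex \<Rightarrow> complex" where
  "gen_fourier_dual sc V phi0 \<phi> z = cnj (\<phi> (phi_fun sc V phi0 (cnj z)))"

end

theory Submission
  imports Defs
begin

text \<open>The operator \<open>V\<^sub>\<beta>\<close> is a right inverse of \<open>D\<close> on \<open>C\<^sup>\<infinity>(D)\<close> which differs from \<open>V\<close> by a
rank-one map into \<open>ker D = \<complex>\<phi>\<^sub>0\<close>. Convergence in \<open>C\<^sup>\<infinity>(D)\<close> controls both \<open>x\<close> and \<open>Dx\<close> in \<open>H\<close>; every
\<open>y \<in> C\<^sup>\<infinity>(D)\<close> is \<open>V(Dy) + c\<phi>\<^sub>0\<close>, and for a limit of \<open>V\<^sub>\<beta>u\<^sub>n\<close> the constant \<open>c\<close> is forced to be the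
limit \<open>\<langle>Dy, x\<^sub>\<beta>\<rangle>\<close> of \<open>\<langle>u\<^sub>n, x\<^sub>\<beta>\<rangle>\<close>, so \<open>y = V\<^sub>\<beta>(Dy)\<close>: the image is closed.
Since \<open>\<lambda>V\<phi>\<^sub>\<lambda> = \<phi>\<^sub>\<lambda> - \<phi>\<^sub>0\<close>, a functional vanishing on \<open>V\<^sub>\<beta>\<phi>\<^sub>\<lambda>\<close> satisfies
\<open>\<phi>(\<phi>\<^sub>\<lambda>) = (1 - \<lambda>\<langle>\<phi>\<^sub>\<lambda>, x\<^sub>\<beta>\<rangle>) \<phi>(\<phi>\<^sub>0)\<close>, and the prescribed transform of \<open>x\<^sub>\<beta>\<close> gives
\<open>\<lambda>\<langle>\<phi>\<^sub>\<lambda>, x\<^sub>\<beta>\<rangle> = 1 - exp(-i\<beta>\<lambda>)\<close>.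
The hypotheses on \<open>E\<close>, \<open>\<alpha>\<close> and \<open>\<beta>\<close> only serve to guarantee that \<open>x\<^sub>\<beta>\<close> exists.\<close>

locale complex_inner_space =
  fixes sc :: "complex \<Rightarrow> 'h::ab_group_add \<Rightarrow> 'h" and ip :: "'h \<Rightarrow> 'h \<Rightarrow> complex"
  assumes hilbert: "separable_complex_hilbert sc ip"
begin

lemma sc_add_right: "sc a (x + y) = sc a x + sc a y"
  using hilbert unfolding separable_complex_hilbert_def by meson
lemma sc_add_left: "sc (a + b) x = sc a x + sc b x"
  using hilbert unfolding separable_complex_hilbert_def by meson
lemma sc_sc: "sc a (sc b x) = sc (a * b) x"
  using hilbert unfolding separable_complex_hilbert_def by meson
lemma sc_one: "sc 1 x = x"
  using hilbert unfolding separable_complex_hilbert_def by meson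
lemma ip_add_left: "ip (x + y) z = ip x z + ip y z"
  using hilbert unfolding separable_complex_hilbert_def by meson
lemma ip_sc_left: "ip (sc a x) y = a * ip x y"
  using hilbert unfolding separable_complex_hilbert_def by meson
lemma ip_cnj: "ip y x = cnj (ip x y)"
  using hilbert unfolding separable_complex_hilbert_def by meson
lemma ip_self_nonneg: "0 \<le> Re (ip x x)"
  using hilbert unfolding separable_complex_hilbert_def by meson
lemma ip_self_eq_zero: "ip x x = 0 \<Longrightarrow> x = 0"
  using hilbert unfolding separable_complex_hilbert_def by meson

lemma sc_zero_left [simp]: "sc 0 x = 0"
  using sc_add_left[of 0 0 x] by simp

lemma sc_zero_right [simp]: "sc a 0 = 0"
  using sc_add_right[of a 0 0] by simp

lemma sc_minus_left: "sc (- a) x = - sc a x"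
  using add.inverse_unique[of "sc a x" "sc (- a) x"] sc_add_left[of a "- a" x] by simp

lemma sc_minus_right: "sc a (- x) = - sc a x"
  using add.inverse_unique[of "sc a x" "sc a (- x)"] sc_add_right[of a x "- x"] by simp

lemma sc_diff_right: "sc a (x - y) = sc a x - sc a y"
  using sc_add_right[of a x "- y"] by (simp add: sc_minus_right)

lemma sc_diff_left: "sc (a - b) x = sc a x - sc b x"
  using sc_add_left[of a "- b" x] by (simp add: sc_minus_left)

lemma ip_zero_left [simp]: "ip 0 y = 0"
  using ip_add_left[of 0 0 y] by simp

lemma ip_diff_left: "ip (x - y) z = ip x z - ip y z"
  using ip_add_left[of "x - y" y z] by simp

lemma ip_add_right: "ip z (x + y) = ip z x + ip z y"
  by (metis ip_cnj ip_add_left complex_cnj_add)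

lemma ip_sc_right: "ip x (sc a y) = cnj a * ip x y"
  by (metis ip_cnj ip_sc_left complex_cnj_mult)

lemma ip_diff_right: "ip z (x - y) = ip z x - ip z y"
  by (metis ip_cnj ip_diff_left complex_cnj_diff)

lemma ip_zero_right [simp]: "ip x 0 = 0"
  by (metis ip_cnj ip_zero_left complex_cnj_zero)

lemma ip_self_real: "ip x x = of_real (Re (ip x x))"
proof -
  have "Im (ip x x) = 0"
    using ip_cnj[of x x] by (metis cnj.sel(2) add.inverse_neutral equal_neg_zero)
  thus ?thesis by (simp add: complex_eq_iff)
qed

lemma hnorm_nonneg: "0 \<le> hnorm ip x"
  unfolding hnorm_def by (simp add: ip_self_nonneg)

lemma hnorm_sq: "(hnorm ip x)\<^sup>2 = Re (ip x x)"
  unfolding hnorm_def using ip_self_nonneg by simp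

lemma hnorm_eq_zero_iff: "hnorm ip x = 0 \<longleftrightarrow> x = 0"
proof
  assume "hnorm ip x = 0"
  hence "Re (ip x x) = 0" using hnorm_sq by (metis power_zero_numeral)
  hence "ip x x = 0" using ip_self_real by (metis of_real_0)
  thus "x = 0" by (rule ip_self_eq_zero)
qed (simp add: hnorm_def)

lemma hnorm_zero [simp]: "hnorm ip 0 = 0"
  by (simp add: hnorm_eq_zero_iff)

lemma hnorm_pos: "x \<noteq> 0 \<Longrightarrow> 0 < hnorm ip x"
  using hnorm_nonneg[of x] hnorm_eq_zero_iff[of x] by linarith

lemma hnorm_sc: "hnorm ip (sc a x) = cmod a * hnorm ip x"
proof -
  have "ip (sc a x) (sc a x) = (a * cnj a) * ip x x"
    by (simp add: ip_sc_left ip_sc_right)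
  also have "\<dots> = of_real ((cmod a)\<^sup>2 * Re (ip x x))"
    by (subst ip_self_real) (simp add: complex_mult_cnj cmod_power2)
  finally have "Re (ip (sc a x) (sc a x)) = (cmod a)\<^sup>2 * Re (ip x x)"
    by simp
  thus ?thesis unfolding hnorm_def by (simp add: real_sqrt_mult)
qed

lemma hnorm_minus: "hnorm ip (- x) = hnorm ip x"
  using hnorm_sc[of "- 1" x] by (simp add: sc_minus_left sc_one)

lemma cauchy_schwarz: "cmod (ip x y) \<le> hnorm ip x * hnorm ip y"
proof (cases "y = 0")
  case True
  thus ?thesis by (simp add: hnorm_nonneg)
next
  case False
  define B where "B = Re (ip y y)"
  have B_pos: "0 < B"
    using hnorm_pos[OF False] hnorm_sq[of y] unfolding B_def by (metis zero_less_power)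
  have yy: "ip y y = of_real B"
    using ip_self_real B_def by simp
  define p where "p = ip x y"
  define t where "t = p / of_real B"
  \<comment> \<open>expand \<open>0 \<le> \<langle>x - ty, x - ty\<rangle>\<close> for the minimising \<open>t = \<langle>x,y\<rangle>/\<langle>y,y\<rangle>\<close>\<close>
  have "ip (x - sc t y) (x - sc t y) = ip x x - cnj t * p - t * cnj p + t * cnj t * of_real B"
    unfolding p_def
    by (simp only: ip_diff_left ip_diff_right ip_sc_left ip_sc_right yy flip: ip_cnj)
       (simp add: algebra_simps ip_cnj[of x y])
  also have "\<dots> = ip x x - p * cnj p / of_real B"
    using B_pos unfolding t_def by (simp add: field_simps)
  also have "\<dots> = ip x x - of_real ((cmod p)\<^sup>2 / B)"
    by (simp add: complex_mult_cnj cmod_power2)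
  finally have "0 \<le> Re (ip x x) - (cmod p)\<^sup>2 / B"
    using ip_self_nonneg[of "x - sc t y"] by simp
  hence "(cmod p)\<^sup>2 \<le> Re (ip x x) * B"
    using B_pos by (simp add: field_simps)
  also have "\<dots> = (hnorm ip x * hnorm ip y)\<^sup>2"
    by (simp add: hnorm_sq B_def power_mult_distrib)
  finally show ?thesis
    unfolding p_def by (rule power2_le_imp_le) (simp add: hnorm_nonneg)
qed

lemma hnorm_triangle: "hnorm ip (x + y) \<le> hnorm ip x + hnorm ip y"
proof -
  have "(hnorm ip (x + y))\<^sup>2 = Re (ip x x) + Re (ip x y) + Re (ip y x) + Re (ip y y)"
    by (simp add: hnorm_sq ip_add_left ip_add_right)
  also have "Re (ip y x) = Re (ip x y)"
    by (subst ip_cnj) simp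
  also have "Re (ip x y) \<le> hnorm ip x * hnorm ip y"
    using cauchy_schwarz[of x y] complex_Re_le_cmod by (metis order_trans)
  hence "Re (ip x x) + Re (ip x y) + Re (ip x y) + Re (ip y y) \<le> (hnorm ip x + hnorm ip y)\<^sup>2"
    by (simp add: hnorm_sq[symmetric] power2_sum)
  finally show ?thesis
    by (rule power2_le_imp_le) (simp add: hnorm_nonneg)
qed

lemma hnorm_triangle_diff: "hnorm ip (x - y) \<le> hnorm ip x + hnorm ip y"
  using hnorm_triangle[of x "- y"] by (simp add: hnorm_minus)

lemma hconv_diff:
  assumes "hconv ip X x" and "hconv ip Y y"
  shows "hconv ip (\<lambda>n. X n - Y n) (x - y)"
  unfolding hconv_def
proof (rule Lim_null_comparison)
  have "hnorm ip (X n - Y n - (x - y)) \<le> hnorm ip (X n - x) + hnorm ip (Y n - y)" for n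
  proof -
    have "X n - Y n - (x - y) = (X n - x) - (Y n - y)"
      by (simp add: algebra_simps)
    thus ?thesis
      by (simp only: hnorm_triangle_diff)
  qed
  thus "\<forall>\<^sub>F n in sequentially. norm (hnorm ip (X n - Y n - (x - y)))
          \<le> hnorm ip (X n - x) + hnorm ip (Y n - y)"
    by (simp add: hnorm_nonneg)
  show "(\<lambda>n. hnorm ip (X n - x) + hnorm ip (Y n - y)) \<longlonglongrightarrow> 0"
    using tendsto_add_zero assms unfolding hconv_def by blast
qed

lemma hconv_ip_left:
  assumes "hconv ip X x"
  shows "(\<lambda>n. ip (X n) z) \<longlonglongrightarrow> ip x z"
proof (rule LIM_zero_cancel, rule Lim_null_comparison)
  have "norm (ip (X n) z - ip x z) \<le> hnorm ip (X n - x) * hnorm ip z" for n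
    unfolding ip_diff_left[symmetric] by (rule cauchy_schwarz)
  thus "\<forall>\<^sub>F n in sequentially. norm (ip (X n) z - ip x z) \<le> hnorm ip (X n - x) * hnorm ip z"
    by simp
  show "(\<lambda>n. hnorm ip (X n - x) * hnorm ip z) \<longlonglongrightarrow> 0"
    using tendsto_mult_left_zero assms unfolding hconv_def by blast
qed

lemma hconv_sc_imp_tendsto:
  assumes "v \<noteq> 0" and "hconv ip (\<lambda>n. sc (c n) v) (sc a v)"
  shows "c \<longlonglongrightarrow> a"
proof -
  have "hnorm ip (sc (c n) v - sc a v) = norm (c n - a) * hnorm ip v" for n
    by (simp only: hnorm_sc flip: sc_diff_left)
  hence "norm (c n - a) = hnorm ip (sc (c n) v - sc a v) / hnorm ip v" for n
    using hnorm_pos[OF assms(1)] by simp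
  moreover have "(\<lambda>n. hnorm ip (sc (c n) v - sc a v) / hnorm ip v) \<longlonglongrightarrow> 0"
    using tendsto_divide_zero assms(2) unfolding hconv_def by blast
  ultimately have "(\<lambda>n. norm (c n - a)) \<longlonglongrightarrow> 0"
    by simp
  thus ?thesis
    by (simp add: tendsto_norm_zero_iff LIM_zero_cancel)
qed

end

lemma weighted_series_tendsto_zero_imp_term_tendsto_zero:
  fixes g :: "nat \<Rightarrow> nat \<Rightarrow> real"
  assumes lim: "(\<lambda>n. \<Sum>i. (1 / 2 ^ i) * (g n i / (1 + g n i))) \<longlonglongrightarrow> 0"
    and nonneg: "\<And>n i. 0 \<le> g n i"
  shows "(\<lambda>n. g n j) \<longlonglongrightarrow> 0"
proof -
  define t where "t n = g n j / (1 + g n j)" for n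
  have t_le: "t n \<le> 2 ^ j * (\<Sum>i. (1 / 2 ^ i) * (g n i / (1 + g n i)))" for n
  proof -
    let ?f = "\<lambda>i. (1 / 2 ^ i) * (g n i / (1 + g n i))"
    have f_nonneg: "0 \<le> ?f i" for i
      using nonneg[of n i] by simp
    have "summable ?f"
    proof (rule summable_comparison_test'[of "\<lambda>i. (1 / 2) ^ i" 0])
      show "summable (\<lambda>i. (1 / 2 :: real) ^ i)"
        by (rule summable_geometric) simp
      show "norm (?f i) \<le> (1 / 2) ^ i" for i
      proof -
        have "g n i / (1 + g n i) \<le> 1"
          using nonneg[of n i] by simp
        hence "?f i \<le> 1 / 2 ^ i"
          by (intro mult_left_le) simp_all
        thus ?thesis
          using f_nonneg[of i] by (simp only: real_norm_def abs_of_nonneg power_one_over[symmetric])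
      qed
    qed
    from sum_le_suminf[OF this, of "{j}"] f_nonneg
    have "(1 / 2 ^ j) * t n \<le> (\<Sum>i. (1 / 2 ^ i) * (g n i / (1 + g n i)))"
      unfolding t_def by simp
    thus ?thesis
      by (simp add: field_simps)
  qed
  have "t \<longlonglongrightarrow> 0"
  proof (rule Lim_null_comparison)
    show "\<forall>\<^sub>F n in sequentially. norm (t n) \<le> 2 ^ j * (\<Sum>i. (1 / 2 ^ i) * (g n i / (1 + g n i)))"
      using t_le nonneg unfolding t_def by simp
    show "(\<lambda>n. 2 ^ j * (\<Sum>i. (1 / 2 ^ i) * (g n i / (1 + g n i)))) \<longlonglongrightarrow> 0"
      using tendsto_mult_right_zero[OF lim] by simp
  qed
  hence "(\<lambda>n. t n / (1 - t n)) \<longlonglongrightarrow> 0 / (1 - 0)"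
    by (intro tendsto_intros) auto
  moreover have "t n / (1 - t n) = g n j" for n
    using nonneg[of n j] unfolding t_def by (simp add: field_simps add_nonneg_eq_0_iff)
  ultimately show ?thesis by simp
qed

lemma (in complex_inner_space) C_inf_dist_tendsto_zero_imp_hconv:
  assumes "(\<lambda>n. C_inf_dist ip D (X n) y) \<longlonglongrightarrow> 0"
  shows "hconv ip (\<lambda>n. (D ^^ j) (X n)) ((D ^^ j) y)"
  unfolding hconv_def
  by (rule weighted_series_tendsto_zero_imp_term_tendsto_zero[where g = "\<lambda>n j. hnorm ip ((D ^^ j) (X n) - (D ^^ j) y)"])
     (use assms hnorm_nonneg in \<open>simp_all add: C_inf_dist_def\<close>)

lemma dom_pow_eq: "dom_pow domD D n = {x. \<forall>k<n. (D ^^ k) x \<in> domD}"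
  by (induction n) (auto simp: less_Suc_eq)

lemma C_inf_iff: "x \<in> C_inf domD D \<longleftrightarrow> (\<forall>k. (D ^^ k) x \<in> domD)"
  unfolding C_inf_def dom_pow_eq by (auto intro: Suc_le_eq[THEN iffD2] less_Suc_eq_le[THEN iffD2])

lemma C_inf_subset: "x \<in> C_inf domD D \<Longrightarrow> x \<in> domD"
  unfolding C_inf_iff by (metis funpow_0)

lemma C_inf_D: "x \<in> C_inf domD D \<Longrightarrow> D x \<in> C_inf domD D"
  unfolding C_inf_iff by (metis funpow_Suc_right o_apply)

lemma C_inf_if_D_C_inf: "y \<in> domD \<Longrightarrow> D y \<in> C_inf domD D \<Longrightarrow> y \<in> C_inf domD D"
  unfolding C_inf_iff by (metis funpow_0 funpow_Suc_right o_apply not0_implies_Suc)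

locale admissible_pair = complex_inner_space sc ip
  for sc :: "complex \<Rightarrow> 'h::ab_group_add \<Rightarrow> 'h" and ip +
  fixes domD :: "'h set" and D V :: "'h \<Rightarrow> 'h" and phi0 :: 'h
  assumes admissible: "admissible sc ip domD D V"
    and phi0: "phi0 \<in> domD" "D phi0 = 0" "phi0 \<noteq> 0"
begin

lemma D_linear: "linear_on sc domD D"
  using admissible unfolding admissible_def closed_operator_def by blast

lemma domD_add: "x \<in> domD \<Longrightarrow> y \<in> domD \<Longrightarrow> x + y \<in> domD"
  and domD_sc: "x \<in> domD \<Longrightarrow> sc a x \<in> domD"
  and D_add: "x \<in> domD \<Longrightarrow> y \<in> domD \<Longrightarrow> D (x + y) = D x + D y"
  and D_sc: "x \<in> domD \<Longrightarrow> D (sc a x) = sc a (D x)"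
  using D_linear unfolding linear_on_def hsubspace_def by blast+

lemma domD_diff: "x \<in> domD \<Longrightarrow> y \<in> domD \<Longrightarrow> x - y \<in> domD"
  using domD_add[of x "sc (- 1) y"] domD_sc[of y "- 1"] by (simp add: sc_minus_left sc_one)

lemma D_diff: "x \<in> domD \<Longrightarrow> y \<in> domD \<Longrightarrow> D (x - y) = D x - D y"
  using D_add[of x "sc (- 1) y"] D_sc[of y "- 1"] domD_sc[of y "- 1"]
  by (simp add: sc_minus_left sc_one)

lemma V_add: "V (x + y) = V x + V y"
  and V_sc: "V (sc a x) = sc a (V x)"
  using admissible unfolding admissible_def compact_op_def linear_on_def by blast+

lemma V_diff: "V (x - y) = V x - V y"
  using V_add[of x "sc (- 1) y"] V_sc[of "- 1" y] by (simp add: sc_minus_left sc_one)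

lemma V_zero: "V 0 = 0"
  using V_sc[of 0 0] by simp

lemma V_in_domD: "V x \<in> domD"
  and D_V: "D (V x) = x"
  using admissible unfolding admissible_def by blast+

lemma D_pow_add:
  "x \<in> C_inf domD D \<Longrightarrow> y \<in> C_inf domD D \<Longrightarrow> (D ^^ k) (x + y) = (D ^^ k) x + (D ^^ k) y"
  by (induction k) (auto simp: C_inf_iff D_add)

lemma D_pow_sc: "x \<in> C_inf domD D \<Longrightarrow> (D ^^ k) (sc a x) = sc a ((D ^^ k) x)"
  by (induction k) (auto simp: C_inf_iff D_sc)

lemma C_inf_add: "x \<in> C_inf domD D \<Longrightarrow> y \<in> C_inf domD D \<Longrightarrow> x + y \<in> C_inf domD D"
  by (subst C_inf_iff) (auto simp: D_pow_add C_inf_iff intro: domD_add)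

lemma C_inf_sc: "x \<in> C_inf domD D \<Longrightarrow> sc a x \<in> C_inf domD D"
  by (subst C_inf_iff) (auto simp: D_pow_sc C_inf_iff intro: domD_sc)

lemma D_zero: "D 0 = 0"
  using D_V[of 0] by (simp add: V_zero)

lemma zero_in_C_inf: "0 \<in> C_inf domD D"
proof -
  have "(D ^^ k) 0 = 0" for k
    by (induction k) (simp_all add: D_zero)
  thus ?thesis
    using V_in_domD[of 0] by (simp add: C_inf_iff V_zero)
qed

lemma domD_eq_V_D_plus_kernel:
  assumes "y \<in> domD"
  shows "\<exists>c. y = V (D y) + sc c phi0"
proof -
  obtain e where e: "{x \<in> domD. D x = 0} = range (\<lambda>c. sc c e)"
    using admissible unfolding admissible_def by blast
  obtain c0 where c0: "phi0 = sc c0 e"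
    using e phi0 by blast
  have "c0 \<noteq> 0"
    using c0 phi0(3) by auto
  have "y - V (D y) \<in> domD" and "D (y - V (D y)) = 0"
    using assms V_in_domD by (simp_all add: domD_diff D_diff D_V)
  then obtain c where "y - V (D y) = sc c e"
    using e by blast
  hence "y = V (D y) + sc (c / c0) phi0"
    using \<open>c0 \<noteq> 0\<close> by (simp add: c0 sc_sc algebra_simps)
  thus ?thesis ..
qed

lemma V_bounded: "\<exists>K. \<forall>x. hnorm ip (V x) \<le> K * hnorm ip x"
proof (rule ccontr)
  assume "\<not> ?thesis"
  hence "\<forall>n::nat. \<exists>x. real n * hnorm ip x < hnorm ip (V x)"
    by (meson not_le)
  then obtain x where x: "\<And>n. real n * hnorm ip (x n) < hnorm ip (V (x n))"
    by metis
  have x_pos: "0 < hnorm ip (x n)" for n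
    using x[of n] by (intro hnorm_pos) (auto simp: V_zero)
  define w where "w n = sc (of_real (1 / hnorm ip (x n))) (x n)" for n
  have w_unit: "hnorm ip (w n) = 1" for n
    using x_pos[of n] unfolding w_def by (simp add: hnorm_sc norm_divide)
  have V_w_large: "real n < hnorm ip (V (w n))" for n
  proof -
    have "hnorm ip (V (w n)) = hnorm ip (V (x n)) / hnorm ip (x n)"
      using x_pos[of n] unfolding w_def by (simp add: V_sc hnorm_sc norm_divide)
    hence "real n * hnorm ip (x n) < hnorm ip (V (w n)) * hnorm ip (x n)"
      using x[of n] x_pos[of n] by simp
    thus ?thesis
      using mult_less_cancel_right_pos[OF x_pos] by blast
  qed
  have "compact_op sc ip V"
    using admissible unfolding admissible_def by blast
  then obtain r l where r: "strict_mono r" and conv: "hconv ip (\<lambda>n. V (w (r n))) l"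
    unfolding compact_op_def using w_unit by (metis order_refl)
  then obtain N where N: "\<And>n. n \<ge> N \<Longrightarrow> hnorm ip (V (w (r n)) - l) < 1"
    unfolding hconv_def using LIMSEQ_D[of _ 0 1] by fastforce
  obtain m :: nat where m: "1 + hnorm ip l < real m"
    using reals_Archimedean2 by blast
  define n where "n = max N m"
  have "hnorm ip (V (w (r n))) \<le> hnorm ip (V (w (r n)) - l) + hnorm ip l"
    using hnorm_triangle[of "V (w (r n)) - l" l] by simp
  also have "\<dots> < real m"
    using N[of n] m n_def by simp
  also have "\<dots> \<le> real (r n)"
    using seq_suble[OF r, of n] n_def by simp
  finally show False
    using V_w_large[of "r n"] by simp
qed

lemma hconv_V:
  assumes "hconv ip X x"
  shows "hconv ip (\<lambda>n. V (X n)) (V x)"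
proof -
  obtain K where K: "\<And>x. hnorm ip (V x) \<le> K * hnorm ip x"
    using V_bounded by blast
  show ?thesis
    unfolding hconv_def
  proof (rule Lim_null_comparison)
    show "\<forall>\<^sub>F n in sequentially. norm (hnorm ip (V (X n) - V x)) \<le> K * hnorm ip (X n - x)"
      using K by (simp add: hnorm_nonneg flip: V_diff)
    show "(\<lambda>n. K * hnorm ip (X n - x)) \<longlonglongrightarrow> 0"
      using tendsto_mult_right_zero assms unfolding hconv_def by blast
  qed
qed

text \<open>The spectrum of \<open>V\<close> is \<open>{0}\<close>, so \<open>I - \<lambda>V = -\<lambda>(V - \<lambda>\<^sup>-\<^sup>1 I)\<close> is invertible for every \<open>\<lambda>\<close>.\<close>

lemma phi_fun_unique: "\<exists>!y. y - sc lam (V y) = phi0"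
proof (cases "lam = 0")
  case True
  thus ?thesis by simp
next
  case False
  define mu where "mu = 1 / lam"
  have "mu \<noteq> 0" and lam_mu: "lam * mu = 1"
    using False by (auto simp: mu_def)
  hence "mu \<notin> op_spectrum sc ip V"
    using admissible unfolding admissible_def by auto
  then obtain S where S: "\<And>x. S (V x - sc mu x) = x" "\<And>y. V (S y) - sc mu (S y) = y"
    unfolding op_spectrum_def by blast
  have factor: "y - sc lam (V y) = sc (- lam) (V y - sc mu y)"
    and factor': "V y - sc mu y = sc (- mu) (y - sc lam (V y))" for y
    using lam_mu by (simp_all add: sc_diff_right sc_sc sc_minus_left sc_one mult.commute)
  define y0 where "y0 = S (sc (- mu) phi0)"
  have "y0 - sc lam (V y0) = phi0"
    unfolding factor y0_def S(2) using lam_mu by (simp add: sc_sc sc_one mult.commute)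
  moreover have "y = y0" if "y - sc lam (V y) = phi0" for y
    using S(1)[of y] unfolding factor' that y0_def by simp
  ultimately show ?thesis by blast
qed

abbreviation phi :: "complex \<Rightarrow> 'h" where
  "phi \<equiv> phi_fun sc V phi0"

lemma phi_eq: "phi lam - sc lam (V (phi lam)) = phi0"
  unfolding phi_fun_def by (rule theI'[OF phi_fun_unique])

lemma phi_zero: "phi 0 = phi0"
  using phi_eq[of 0] by simp

lemma phi_in_domD: "phi lam \<in> domD"
  and D_phi: "D (phi lam) = sc lam (phi lam)"
proof -
  have phi: "phi lam = phi0 + sc lam (V (phi lam))"
    using phi_eq[of lam] by (simp add: diff_eq_eq add.commute)
  show "phi lam \<in> domD"
    by (subst phi) (intro domD_add domD_sc phi0 V_in_domD)
  show "D (phi lam) = sc lam (phi lam)"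
    by (subst (1) phi) (simp add: D_add domD_sc V_in_domD phi0 D_sc D_V)
qed

lemma phi_in_C_inf: "phi lam \<in> C_inf domD D"
proof -
  have "(D ^^ k) (phi lam) = sc (lam ^ k) (phi lam)" for k
    by (induction k) (simp_all add: sc_one D_sc phi_in_domD D_phi sc_sc mult.commute)
  thus ?thesis
    by (simp add: C_inf_iff domD_sc phi_in_domD)
qed

definition V_beta :: "'h \<Rightarrow> 'h \<Rightarrow> 'h" where
  "V_beta xb u = V u + sc (ip u xb) phi0"

lemma V_beta_in_domD: "V_beta xb u \<in> domD"
  unfolding V_beta_def by (intro domD_add V_in_domD domD_sc phi0)

lemma D_V_beta: "D (V_beta xb u) = u"
  unfolding V_beta_def by (simp add: D_add V_in_domD domD_sc phi0 D_sc D_V)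

lemma V_beta_in_C_inf: "u \<in> C_inf domD D \<Longrightarrow> V_beta xb u \<in> C_inf domD D"
  by (rule C_inf_if_D_C_inf[OF V_beta_in_domD]) (simp add: D_V_beta)

lemma hsubspace_V_beta_image: "hsubspace sc (V_beta xb ` C_inf domD D)"
  unfolding hsubspace_def
proof (intro conjI ballI allI)
  have "V_beta xb 0 = 0"
    unfolding V_beta_def by (simp add: V_zero)
  thus "0 \<in> V_beta xb ` C_inf domD D"
    using zero_in_C_inf by (metis image_eqI)
next
  fix x y
  assume "x \<in> V_beta xb ` C_inf domD D" "y \<in> V_beta xb ` C_inf domD D"
  then obtain u v where "u \<in> C_inf domD D" "v \<in> C_inf domD D" "x = V_beta xb u" "y = V_beta xb v"
    by blast
  moreover have "V_beta xb u + V_beta xb v = V_beta xb (u + v)"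
    unfolding V_beta_def by (simp add: V_add ip_add_left sc_add_left algebra_simps)
  ultimately show "x + y \<in> V_beta xb ` C_inf domD D"
    using C_inf_add by auto
next
  fix a x
  assume "x \<in> V_beta xb ` C_inf domD D"
  then obtain u where "u \<in> C_inf domD D" "x = V_beta xb u"
    by blast
  moreover have "sc a (V_beta xb u) = V_beta xb (sc a u)"
    unfolding V_beta_def by (simp add: V_sc ip_sc_left sc_add_right sc_sc)
  ultimately show "sc a x \<in> V_beta xb ` C_inf domD D"
    using C_inf_sc by auto
qed

lemma C_inf_closed_V_beta_image: "C_inf_closed ip domD D (V_beta xb ` C_inf domD D)"
  unfolding C_inf_closed_def
proof (intro conjI allI impI)
  show "V_beta xb ` C_inf domD D \<subseteq> C_inf domD D"
    using V_beta_in_C_inf by blast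
next
  fix X y
  assume asm: "(\<forall>n. X n \<in> V_beta xb ` C_inf domD D) \<and> y \<in> C_inf domD D \<and>
      (\<lambda>n. C_inf_dist ip D (X n) y) \<longlonglongrightarrow> 0"
  hence y: "y \<in> C_inf domD D" and lim: "(\<lambda>n. C_inf_dist ip D (X n) y) \<longlonglongrightarrow> 0"
    by auto
  from asm have "\<forall>n. \<exists>u. X n = V_beta xb u"
    by blast
  then obtain u where X: "\<And>n. X n = V_beta xb (u n)"
    by metis
  have X_conv: "hconv ip X y"
    using C_inf_dist_tendsto_zero_imp_hconv[OF lim, of 0] by simp
  have u_conv: "hconv ip u (D y)"
    using C_inf_dist_tendsto_zero_imp_hconv[OF lim, of 1] by (simp add: X D_V_beta)
  obtain c where c: "y = V (D y) + sc c phi0"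
    using domD_eq_V_D_plus_kernel C_inf_subset[OF y] by blast
  have "hconv ip (\<lambda>n. X n - V (u n)) (y - V (D y))"
    by (rule hconv_diff[OF X_conv hconv_V[OF u_conv]])
  moreover have "X n - V (u n) = sc (ip (u n) xb) phi0" for n
    by (simp add: X V_beta_def)
  moreover have "y - V (D y) = sc c phi0"
    using c by (simp add: diff_eq_eq add.commute)
  ultimately have "hconv ip (\<lambda>n. sc (ip (u n) xb) phi0) (sc c phi0)"
    by simp
  hence "(\<lambda>n. ip (u n) xb) \<longlonglongrightarrow> c"
    by (rule hconv_sc_imp_tendsto[OF phi0(3)])
  moreover have "(\<lambda>n. ip (u n) xb) \<longlonglongrightarrow> ip (D y) xb"
    by (rule hconv_ip_left[OF u_conv])
  ultimately have "c = ip (D y) xb"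
    by (rule LIMSEQ_unique)
  hence "y = V_beta xb (D y)"
    using c unfolding V_beta_def by simp
  thus "y \<in> V_beta xb ` C_inf domD D"
    using C_inf_D[OF y] by blast
qed

lemma annihilator_V_beta_image_phi:
  assumes "\<phi> \<in> annihilator sc ip domD D (V_beta xb ` C_inf domD D)"
  shows "\<phi> (phi lam) = (1 - lam * ip (phi lam) xb) * \<phi> phi0"
proof -
  have add: "\<phi> (x + y) = \<phi> x + \<phi> y" if "x \<in> C_inf domD D" "y \<in> C_inf domD D" for x y
    using assms that unfolding annihilator_def C_inf_dual_def by blast
  have scale: "\<phi> (sc a x) = a * \<phi> x" if "x \<in> C_inf domD D" for a x
    using assms that unfolding annihilator_def C_inf_dual_def by blast
  have phi0_C_inf: "phi0 \<in> C_inf domD D"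
    using phi_in_C_inf[of 0] by (simp add: phi_zero)
  let ?p = "phi lam"
  have V_p: "V ?p \<in> C_inf domD D"
    by (rule C_inf_if_D_C_inf[OF V_in_domD]) (simp add: D_V phi_in_C_inf)
  have "\<phi> (V_beta xb ?p) = 0"
    using assms phi_in_C_inf unfolding annihilator_def by blast
  hence vanish: "\<phi> (V ?p) + ip ?p xb * \<phi> phi0 = 0"
    unfolding V_beta_def using add[OF V_p C_inf_sc[OF phi0_C_inf]] scale[OF phi0_C_inf] by simp
  have "sc lam (V ?p) = ?p + sc (- 1) phi0"
    using phi_eq[of lam] by (simp add: sc_minus_left sc_one algebra_simps)
  hence "lam * \<phi> (V ?p) = \<phi> ?p - \<phi> phi0"
    using scale[OF V_p, of lam] add[OF phi_in_C_inf C_inf_sc[OF phi0_C_inf]]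
      scale[OF phi0_C_inf, of "- 1"]
    by simp
  hence "\<phi> ?p = \<phi> phi0 + lam * \<phi> (V ?p)"
    by (simp add: eq_diff_eq add.commute)
  also have "\<dots> = \<phi> phi0 - lam * ip ?p xb * \<phi> phi0"
    using vanish by (simp add: eq_neg_iff_add_eq_0[symmetric])
  also have "\<dots> = (1 - lam * ip ?p xb) * \<phi> phi0"
    by (simp add: algebra_simps)
  finally show ?thesis .
qed

end

lemma (in complex_inner_space) lambda_ip_phi_fun_eq_one_minus_exp:
  fixes \<beta> :: real
  assumes "gen_fourier sc ip V phi0 xb =
             (\<lambda>z. if z = 0 then - \<i> * of_real \<beta> else (1 - exp (\<i> * of_real \<beta> * z)) / z)"
  shows "lam * ip (phi_fun sc V phi0 lam) xb = 1 - exp (- \<i> * of_real \<beta> * lam)"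
proof (cases "lam = 0")
  case False
  have "ip (phi_fun sc V phi0 lam) xb = cnj (gen_fourier sc ip V phi0 xb (cnj lam))"
    unfolding gen_fourier_def by (simp flip: ip_cnj)
  also have "\<dots> = (1 - exp (- \<i> * of_real \<beta> * lam)) / lam"
    using False assms by (simp add: exp_cnj)
  finally show ?thesis
    using False by simp
qed simp

theorem lemma6p12:
  fixes sc :: "complex \<Rightarrow> 'h::ab_group_add \<Rightarrow> 'h"
    and ip :: "'h \<Rightarrow> 'h \<Rightarrow> complex"
    and domD :: "'h set" and D V :: "'h \<Rightarrow> 'h" and phi0 x\<beta> :: 'h
    and E :: "complex \<Rightarrow> complex" and \<alpha> \<beta> :: real
  assumes H: "separable_complex_hilbert sc ip"
    and adm: "admissible sc ip domD D V"
    and phi0: "phi0 \<in> domD" "D phi0 = 0" "phi0 \<noteq> 0"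
    and E_HB: "hermite_biehler E" and E_reg: "regular_HB E"
    and E_nz: "\<forall>t::real. E (of_real t) \<noteq> 0"
    and unitary:
      "(\<lambda>f z. exp (\<i> * of_real \<alpha> * z) * f z) ` range (gen_fourier sc ip V phi0) = de_branges_space E"
      "\<forall>x. de_branges_norm E (\<lambda>z. exp (\<i> * of_real \<alpha> * z) * gen_fourier sc ip V phi0 x z) = hnorm ip x"
    and \<beta>: "ereal \<bar>\<beta> + \<alpha>\<bar> \<le> exp_type E"
    and x\<beta>: "gen_fourier sc ip V phi0 x\<beta> =
               (\<lambda>z. if z = 0 then - \<i> * of_real \<beta> else (1 - exp (\<i> * of_real \<beta> * z)) / z)"
  shows "hsubspace sc ((\<lambda>u. V u + sc (ip u x\<beta>) phi0) ` C_inf domD D) \<and>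
         C_inf_closed ip domD D ((\<lambda>u. V u + sc (ip u x\<beta>) phi0) ` C_inf domD D) \<and>
         (\<forall>\<phi> \<in> annihilator sc ip domD D ((\<lambda>u. V u + sc (ip u x\<beta>) phi0) ` C_inf domD D).
            \<exists>c. \<forall>z. gen_fourier_dual sc V phi0 \<phi> z = c * exp (\<i> * of_real \<beta> * z))"
proof -
  interpret admissible_pair sc ip domD D V phi0
    using H adm phi0 by unfold_locales auto
  have "gen_fourier_dual sc V phi0 \<phi> z = cnj (\<phi> phi0) * exp (\<i> * of_real \<beta> * z)"
    if "\<phi> \<in> annihilator sc ip domD D (V_beta x\<beta> ` C_inf domD D)" for \<phi> z
    using annihilator_V_beta_image_phi[OF that, of "cnj z"]
      lambda_ip_phi_fun_eq_one_minus_exp[OF x\<beta>, of "cnj z"]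
    unfolding gen_fourier_dual_def by (simp add: exp_cnj)
  thus ?thesis
    using hsubspace_V_beta_image C_inf_closed_V_beta_image unfolding V_beta_def by blast
qed

end
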